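(* Let $f:\mathbb{R}^\ell\times\mathbb{R}^m\to\mathbb{R}^\ell$ be $C^1$, let $\Lambda$ be a parameter shift with limits $\lambda_\pm$, and let $X$ define a stable path. Let $N\in\mathbb{N}$ be such that $\|[D_xf(X(s),\Lambda(s))]^n\|<\frac14$ for all $s\in\mathbb{R}$ and $n\ge N$. Then, for $r>0$ and $\epsilon>0$ sufficiently small, for all $n\in\{N,N+1,\ldots,N(N+1)\}$ and all $(s,x)\in\mathcal{N}_\epsilon$, $$\|D_x[\pi\circ F_r^n](s,x)\|<\tfrac12.$$
   Context: A parameter shift is a $C^1$ function $\Lambda:\mathbb{R}\to\mathbb{R}^m$ with $\lim_{s\to\pm\infty}\Lambda(s)=\lambda_\pm$ and $\lim_{s\to\pm\infty}\Lambda'(s)=0$. A stable path is given by $X:\mathbb{R}\to\mathbb{R}^\ell$ such that: $X(s)$ is a fixed point of $f(\cdot,\Lambda(s))$ for every $s$; $\{(s,X(s))\}$ is a connected curve; the limits $X_\pm=\lim_{s\to\pm\infty}X(s)$ exist and are fixed points of $f(\cdot,\lambda_\pm)$; and the spectral radius of $D_xf(X(s),\Lambda(s))$ is $<1$ for all $s\in\mathbb{R}\cup\{\pm\infty\}$. For $r\ge0$, $F_r(s,x)=(s+r,f(x,\Lambda(s)))$ and $F_r^n$ is its $n$-fold composition; $\pi(s,x)=x$, and $D_x$ is the derivative with respect to the last $\ell$ coordinates. $\mathcal{N}_\epsilon=\{(s,x):s\in\mathbb{R},\ \|x-X(s)\|\le\epsilon\}$ (Euclidean norm; matrix norms induced).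 *)

theory Defs
  imports "HOL-Analysis.Analysis"
begin

definition C1_map :: "('a::euclidean_space \<Rightarrow> 'b::euclidean_space) \<Rightarrow> bool" where
  "C1_map g \<longleftrightarrow> (\<exists>g'. (\<forall>p. (g has_derivative blinfun_apply (g' p)) (at p)) \<and> continuous_on UNIV g')"

definition eigenvalues_C :: "real^'n^'n \<Rightarrow> complex set" where
  "eigenvalues_C A = {\<mu>. \<exists>v::complex^'n. v \<noteq> 0 \<and> map_matrix complex_of_real A *v v = \<mu> *s v}"

definition spec_rad :: "real^'n^'n \<Rightarrow> real" where
  "spec_rad A = Max (cmod ` eigenvalues_C A)"

definition Dx :: "(real^'l \<Rightarrow> real^'m \<Rightarrow> real^'l) \<Rightarrow> real^'l \<Rightarrow> real^'m \<Rightarrow> (real^'l \<Rightarrow> real^'l)" where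
  "Dx f x lam = frechet_derivative (\<lambda>y. f y lam) (at x)"

definition parameter_shift :: "(real \<Rightarrow> real^'m) \<Rightarrow> real^'m \<Rightarrow> real^'m \<Rightarrow> bool" where
  "parameter_shift Lam lm lp \<longleftrightarrow>
     Lam C1_differentiable_on UNIV \<and>
     (Lam \<longlongrightarrow> lp) at_top \<and> (Lam \<longlongrightarrow> lm) at_bot \<and>
     ((\<lambda>s. vector_derivative Lam (at s)) \<longlongrightarrow> 0) at_top \<and>
     ((\<lambda>s. vector_derivative Lam (at s)) \<longlongrightarrow> 0) at_bot"

definition stable_path ::
  "(real^'l \<Rightarrow> real^'m \<Rightarrow> real^'l) \<Rightarrow> (real \<Rightarrow> real^'m) \<Rightarrow> real^'m \<Rightarrow> real^'m \<Rightarrow> (real \<Rightarrow> real^'l) \<Rightarrow> bool" where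
  "stable_path f Lam lm lp X \<longleftrightarrow>
     (\<forall>s. f (X s) (Lam s) = X s) \<and>
     connected ((\<lambda>s. (s, X s)) ` UNIV) \<and>
     (\<exists>Xm Xp. (X \<longlongrightarrow> Xp) at_top \<and> (X \<longlongrightarrow> Xm) at_bot \<and>
        f Xp lp = Xp \<and> f Xm lm = Xm \<and>
        spec_rad (matrix (Dx f Xp lp)) < 1 \<and> spec_rad (matrix (Dx f Xm lm)) < 1) \<and>
     (\<forall>s. spec_rad (matrix (Dx f (X s) (Lam s))) < 1)"

definition Fr :: "(real^'l \<Rightarrow> real^'m \<Rightarrow> real^'l) \<Rightarrow> (real \<Rightarrow> real^'m) \<Rightarrow> real \<Rightarrow> (real \<times> (real^'l)) \<Rightarrow> (real \<times> (real^'l))" where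
  "Fr f Lam r = (\<lambda>(s, x). (s + r, f x (Lam s)))"

end

theory Submission
  imports Defs
begin

(*
  By the chain rule, D_x (pi o F_r^n) at (s, x) is the product of the n partial derivatives
  D_x f along the orbit of x, taken at the parameters Lam (s + k r).  If x is close to X s and
  r is small, all factors are uniformly close to A = D_x f (X s, Lam s), so for the finitely many
  n <= N (N + 1) the product is within 1/4 of A^n, whose norm is below 1/4.  Uniformity in s
  comes from uniform continuity of f and D_x f near the set {(X s, Lam s)}, which is bounded
  once X is known to be continuous.  Continuity of X is not assumed, only connectedness of its
  graph: since norm (A^N) < 1, f(., l)^N is a contraction near X s for l near Lam s, so stable
  fixed points lie on unique continuous local branches, and connectedness of the graph forces X
  to follow such branches everywhere.
*)

primrec comp_upto :: "(nat \<Rightarrow> 'a::real_normed_vector \<Rightarrow>\<^sub>L 'a) \<Rightarrow> nat \<Rightarrow> 'a \<Rightarrow>\<^sub>L 'a" where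
  "comp_upto Q 0 = id_blinfun"
| "comp_upto Q (Suc n) = Q n o\<^sub>L comp_upto Q n"

primrec orbit :: "('a \<Rightarrow> 'b \<Rightarrow> 'a) \<Rightarrow> (nat \<Rightarrow> 'b) \<Rightarrow> nat \<Rightarrow> 'a \<Rightarrow> 'a" where
  "orbit f \<mu> 0 x = x"
| "orbit f \<mu> (Suc n) x = f (orbit f \<mu> n x) (\<mu> n)"

lemma orbit_const: "orbit f (\<lambda>_. l) n = (\<lambda>x. f x l) ^^ n"
  by (induction n) auto

lemma funpow_fixpoint: "f x = x \<Longrightarrow> (f ^^ n) x = x"
  by (induction n) auto

lemma blinfun_apply_comp_upto_const: "blinfun_apply (comp_upto (\<lambda>_. A) n) = blinfun_apply A ^^ n"
  by (induction n) (auto simp: fun_eq_iff)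

lemma norm_comp_upto_le:
  assumes "\<And>k. k < n \<Longrightarrow> norm (Q k) \<le> K" and "0 \<le> K"
  shows "norm (comp_upto Q n) \<le> K ^ n"
  using assms
proof (induction n)
  case (Suc n)
  have "norm (comp_upto Q (Suc n)) \<le> norm (Q n) * norm (comp_upto Q n)"
    by (simp add: norm_blinfun_compose)
  also have "\<dots> \<le> K * K ^ n"
    using Suc by (intro mult_mono) auto
  finally show ?case by simp
qed (simp add: norm_blinfun_id_le)

lemma norm_comp_upto_diff_le:
  assumes close: "\<And>k. k < n \<Longrightarrow> norm (Q k - A) \<le> \<eta>"
    and bound: "\<And>k. k < n \<Longrightarrow> norm (Q k) \<le> K" "norm A \<le> K" and "1 \<le> K"
  shows "norm (comp_upto Q n - comp_upto (\<lambda>_. A) n) \<le> n * K ^ n * \<eta>"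
  using close bound(1)
proof (induction n)
  case (Suc n)
  let ?P = "comp_upto Q n" and ?R = "comp_upto (\<lambda>_. A) n"
  have "0 \<le> \<eta>" using Suc.prems(1)[of n] by (meson lessI norm_ge_zero order_trans)
  have "comp_upto Q (Suc n) - comp_upto (\<lambda>_. A) (Suc n) = ((Q n - A) o\<^sub>L ?P) + (A o\<^sub>L (?P - ?R))"
    by (rule blinfun_eqI) (simp add: blinfun.bilinear_simps)
  then have "norm (comp_upto Q (Suc n) - comp_upto (\<lambda>_. A) (Suc n))
      \<le> norm (Q n - A) * norm ?P + norm A * norm (?P - ?R)"
    by (metis norm_blinfun_compose norm_triangle_le add_mono)
  also have "\<dots> \<le> \<eta> * K ^ n + K * (n * K ^ n * \<eta>)"
    using Suc \<open>0 \<le> \<eta>\<close> \<open>1 \<le> K\<close> bound(2) by (intro add_mono mult_mono norm_comp_upto_le) auto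
  also have "\<dots> \<le> Suc n * K ^ Suc n * \<eta>"
  proof -
    have "\<eta> * K ^ n * 1 \<le> \<eta> * K ^ n * K"
      using \<open>0 \<le> \<eta>\<close> \<open>1 \<le> K\<close> by (intro mult_left_mono) auto
    then show ?thesis by (simp add: algebra_simps)
  qed
  finally show ?case .
qed simp

lemma dist_Pair_le_add:
  fixes a c :: "'a::real_normed_vector" and b d :: "'b::real_normed_vector"
  shows "dist (a, b) (c, d) \<le> dist a c + dist b d"
  using norm_Pair_le[of "a - c" "b - d"] by (simp add: dist_norm)

lemma compact_neighbourhood_of_bounded:
  fixes B :: "'a::euclidean_space set"
  assumes "bounded B"
  obtains C where "compact C" "\<And>p p0. p0 \<in> B \<Longrightarrow> dist p p0 < 1 \<Longrightarrow> p \<in> C"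
proof -
  obtain R where R: "\<And>p. p \<in> B \<Longrightarrow> norm p \<le> R"
    using assms bounded_iff by blast
  show thesis
  proof (rule that[of "cball 0 (R + 1)"])
    fix p p0 assume "p0 \<in> B" "dist p p0 < 1"
    then show "p \<in> cball 0 (R + 1)"
      using R[of p0] norm_triangle_ineq2[of p p0] by (simp add: dist_norm)
  qed simp
qed

lemma uniformly_continuous_near_bounded:
  fixes g :: "'a::euclidean_space \<Rightarrow> 'b::metric_space"
  assumes "continuous_on UNIV g" "bounded B" "e > 0"
  obtains d where "d > 0" "\<And>p p0. p0 \<in> B \<Longrightarrow> dist p p0 < d \<Longrightarrow> dist (g p) (g p0) < e"
proof -
  obtain C where C: "compact C" "\<And>p p0. p0 \<in> B \<Longrightarrow> dist p p0 < 1 \<Longrightarrow> p \<in> C"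
    using compact_neighbourhood_of_bounded[OF assms(2)] by blast
  have "uniformly_continuous_on C g"
    using compact_uniformly_continuous[OF continuous_on_subset[OF assms(1)] C(1)] by simp
  then obtain d where d: "d > 0" "\<And>p p0. p \<in> C \<Longrightarrow> p0 \<in> C \<Longrightarrow> dist p p0 < d \<Longrightarrow> dist (g p) (g p0) < e"
    using assms(3) unfolding uniformly_continuous_on_def by metis
  show thesis
  proof (rule that[of "min d 1"])
    fix p p0 assume "p0 \<in> B" "dist p p0 < min d 1"
    then show "dist (g p) (g p0) < e"
      using C(2)[of p0 p] C(2)[of p0 p0] d(2)[of p p0] by simp
  qed (use d in simp)
qed

lemma bounded_near_bounded:
  fixes g :: "'a::euclidean_space \<Rightarrow> 'b::real_normed_vector"
  assumes "continuous_on UNIV g" "bounded B"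
  obtains K where "\<And>p p0. p0 \<in> B \<Longrightarrow> dist p p0 < 1 \<Longrightarrow> norm (g p) \<le> K"
proof -
  obtain C where C: "compact C" "\<And>p p0. p0 \<in> B \<Longrightarrow> dist p p0 < 1 \<Longrightarrow> p \<in> C"
    using compact_neighbourhood_of_bounded[OF assms(2)] by blast
  have "bounded (g ` C)"
    using compact_continuous_image[OF continuous_on_subset[OF assms(1)] C(1)] compact_imp_bounded
    by blast
  then obtain K where "\<And>p. p \<in> C \<Longrightarrow> norm (g p) \<le> K"
    unfolding bounded_iff by blast
  with C(2) show thesis by (metis that)
qed

lemma contraction_cball_fixpoint:
  fixes h :: "'a::complete_space \<Rightarrow> 'a"
  assumes "0 \<le> q" "q < 1" "0 \<le> \<delta>" and centre: "dist (h x0) x0 \<le> (1 - q) * \<delta>"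
    and lip: "\<And>x y. x \<in> cball x0 \<delta> \<Longrightarrow> y \<in> cball x0 \<delta> \<Longrightarrow> dist (h x) (h y) \<le> q * dist x y"
  shows "\<exists>x \<in> cball x0 \<delta>. h x = x"
proof -
  have maps: "h ` cball x0 \<delta> \<subseteq> cball x0 \<delta>"
  proof clarify
    fix x assume x: "x \<in> cball x0 \<delta>"
    have "dist (h x) x0 \<le> dist (h x) (h x0) + dist (h x0) x0"
      by (rule dist_triangle)
    also have "dist (h x) (h x0) \<le> q * dist x x0"
      using lip[OF x] \<open>0 \<le> \<delta>\<close> by (simp add: dist_commute)
    also have "q * dist x x0 \<le> q * \<delta>"
      using x \<open>0 \<le> q\<close> by (intro mult_left_mono) (auto simp: dist_commute)
    finally show "h x \<in> cball x0 \<delta>"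
      using centre by (simp add: dist_commute algebra_simps)
  qed
  have "\<exists>!x \<in> cball x0 \<delta>. h x = x"
    by (rule Banach_fix[OF _ _ \<open>0 \<le> q\<close> \<open>q < 1\<close> maps])
      (use lip \<open>0 \<le> \<delta>\<close> in \<open>auto simp: complete_eq_closed\<close>)
  then show ?thesis by blast
qed

lemma contraction_fixpoint_unique:
  assumes "q < 1" "dist (h x) (h y) \<le> q * dist x y" "h x = x" "h y = y"
  shows "x = y"
proof -
  have "(1 - q) * dist x y \<le> 0"
    using assms(2-4) by (simp add: algebra_simps)
  then show ?thesis
    using \<open>q < 1\<close> by (simp add: mult_le_0_iff)
qed

lemma continuous_on_contraction_fixpoint:
  fixes h :: "'c::metric_space \<Rightarrow> 'a::metric_space \<Rightarrow> 'a"
  assumes "q < 1"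
    and lip: "\<And>l x y. l \<in> U \<Longrightarrow> x \<in> S \<Longrightarrow> y \<in> S \<Longrightarrow> dist (h l x) (h l y) \<le> q * dist x y"
    and z: "\<And>l. l \<in> U \<Longrightarrow> z l \<in> S" "\<And>l. l \<in> U \<Longrightarrow> h l (z l) = z l"
    and cont: "\<And>x. x \<in> S \<Longrightarrow> continuous_on U (\<lambda>l. h l x)"
  shows "continuous_on U z"
  unfolding continuous_on_iff
proof (intro ballI allI impI)
  fix l' e assume l': "l' \<in> U" and "0 < (e::real)"
  then have "0 < e * (1 - q)" using \<open>q < 1\<close> by simp
  then obtain d where "0 < d"
    and d: "\<And>l. l \<in> U \<Longrightarrow> dist l l' < d \<Longrightarrow> dist (h l (z l')) (h l' (z l')) < e * (1 - q)"
    using cont[OF z(1)[OF l']] l' unfolding continuous_on_iff by metis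
  show "\<exists>d>0. \<forall>l\<in>U. dist l l' < d \<longrightarrow> dist (z l) (z l') < e"
  proof (intro exI[of _ d] conjI ballI impI)
    fix l assume l: "l \<in> U" "dist l l' < d"
    have "dist (z l) (z l') = dist (h l (z l)) (h l' (z l'))"
      using z(2) l l' by simp
    also have "\<dots> \<le> dist (h l (z l)) (h l (z l')) + dist (h l (z l')) (h l' (z l'))"
      by (rule dist_triangle)
    also have "\<dots> < q * dist (z l) (z l') + e * (1 - q)"
      using lip[OF l(1) z(1)[OF l(1)] z(1)[OF l']] d[OF l] by linarith
    finally have "(1 - q) * dist (z l) (z l') < (1 - q) * e"
      by (simp add: algebra_simps)
    then show "dist (z l) (z l') < e"
      using \<open>q < 1\<close> by simp
  qed (rule \<open>0 < d\<close>)
qed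

lemma bounded_range_if_tendsto_at_top_at_bot:
  fixes g :: "real \<Rightarrow> 'a::real_normed_vector"
  assumes "continuous_on UNIV g" "(g \<longlongrightarrow> a) at_top" "(g \<longlongrightarrow> b) at_bot"
  shows "bounded (range g)"
proof -
  obtain T1 where T1: "\<And>t. t \<ge> T1 \<Longrightarrow> dist (g t) a < 1"
    using assms(2)[unfolded tendsto_iff] eventually_at_top_linorder by (metis zero_less_one)
  obtain T2 where T2: "\<And>t. t \<le> T2 \<Longrightarrow> dist (g t) b < 1"
    using assms(3)[unfolded tendsto_iff] eventually_at_bot_linorder by (metis zero_less_one)
  have "g t \<in> g ` {T2..T1} \<union> ball a 1 \<union> ball b 1" for t
    using T1[of t] T2[of t] by (cases "t \<le> T1"; cases "T2 \<le> t") (auto simp: dist_commute)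
  then have "range g \<subseteq> g ` {T2..T1} \<union> ball a 1 \<union> ball b 1"
    by blast
  moreover have "compact (g ` {T2..T1})"
    by (rule compact_continuous_image[OF continuous_on_subset[OF assms(1)]]) auto
  ultimately show ?thesis
    by (meson bounded_Un bounded_ball bounded_subset compact_imp_bounded)
qed

lemma uniformly_continuous_if_tendsto_at_top_at_bot:
  fixes g :: "real \<Rightarrow> 'a::real_normed_vector"
  assumes "continuous_on UNIV g" "(g \<longlongrightarrow> a) at_top" "(g \<longlongrightarrow> b) at_bot"
  shows "uniformly_continuous_on UNIV g"
  unfolding uniformly_continuous_on_def
proof (intro allI impI)
  fix e :: real assume "e > 0"
  then obtain T1 where T1: "\<And>t. t \<ge> T1 \<Longrightarrow> dist (g t) a < e / 2"
    using assms(2)[unfolded tendsto_iff] eventually_at_top_linorder by (metis half_gt_zero)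
  obtain T2 where T2: "\<And>t. t \<le> T2 \<Longrightarrow> dist (g t) b < e / 2"
    using assms(3)[unfolded tendsto_iff] eventually_at_bot_linorder \<open>e > 0\<close> by (metis half_gt_zero)
  have "uniformly_continuous_on {T2 - 1..T1 + 1} g"
    by (rule compact_uniformly_continuous[OF continuous_on_subset[OF assms(1)]]) auto
  then obtain d where "d > 0" and d: "\<And>s t. s \<in> {T2 - 1..T1 + 1} \<Longrightarrow> t \<in> {T2 - 1..T1 + 1}
      \<Longrightarrow> dist s t < d \<Longrightarrow> dist (g s) (g t) < e"
    using \<open>e > 0\<close> unfolding uniformly_continuous_on_def by metis
  show "\<exists>d>0. \<forall>t\<in>UNIV. \<forall>s\<in>UNIV. dist s t < d \<longrightarrow> dist (g s) (g t) < e"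
  proof (intro exI[of _ "min d 1"] conjI ballI impI)
    fix s t :: real assume st: "dist s t < min d 1"
    have "\<bar>s - t\<bar> < 1" "dist s t < d" using st by (auto simp: dist_real_def)
    then have "(s \<in> {T2 - 1..T1 + 1} \<and> t \<in> {T2 - 1..T1 + 1})
        \<or> (T1 \<le> s \<and> T1 \<le> t) \<or> (s \<le> T2 \<and> t \<le> T2)"
      unfolding atLeastAtMost_iff by linarith
    then show "dist (g s) (g t) < e"
    proof (elim disjE conjE)
      assume "T1 \<le> s" "T1 \<le> t"
      then have "dist (g s) a < e / 2" "dist (g t) a < e / 2" using T1 by auto
      then show ?thesis by (rule dist_triangle_half_l)
    next
      assume "s \<le> T2" "t \<le> T2"
      then have "dist (g s) b < e / 2" "dist (g t) b < e / 2" using T2 by auto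
      then show ?thesis by (rule dist_triangle_half_l)
    qed (use d \<open>dist s t < d\<close> in blast)
  qed (use \<open>d > 0\<close> in simp)
qed

definition embed_fst_blinfun :: "'a::real_normed_vector \<Rightarrow>\<^sub>L ('a \<times> 'b::real_normed_vector)" where
  "embed_fst_blinfun = Blinfun (\<lambda>v. (v, 0))"

lemma embed_fst_blinfun_apply [simp]: "blinfun_apply embed_fst_blinfun v = (v, 0)"
  unfolding embed_fst_blinfun_def
  by (simp add: bounded_linear_Blinfun_apply bounded_linear_Pair bounded_linear_ident
      bounded_linear_zero)

lemma Fr_funpow:
  "(Fr f Lam r ^^ n) (s, y) = (s + real n * r, orbit f (\<lambda>k. Lam (s + real k * r)) n y)"
  by (induction n) (auto simp: Fr_def algebra_simps)

locale C1_family =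
  fixes f :: "'a::euclidean_space \<Rightarrow> 'b::euclidean_space \<Rightarrow> 'a"
    and Df :: "'a \<times> 'b \<Rightarrow> ('a \<times> 'b) \<Rightarrow>\<^sub>L 'a"
  assumes has_derivative_Df: "\<And>p. ((\<lambda>p. f (fst p) (snd p)) has_derivative Df p) (at p)"
    and continuous_on_Df: "continuous_on UNIV Df"
begin

definition D1 :: "'a \<times> 'b \<Rightarrow> 'a \<Rightarrow>\<^sub>L 'a" where
  "D1 p = Df p o\<^sub>L embed_fst_blinfun"

lemma continuous_on_f: "continuous_on UNIV (\<lambda>p. f (fst p) (snd p))"
  using has_derivative_Df has_derivative_continuous continuous_at_imp_continuous_on by blast

lemma continuous_on_D1: "continuous_on UNIV D1"
  unfolding D1_def by (intro continuous_intros continuous_on_Df)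

lemma has_derivative_D1: "((\<lambda>y. f y l) has_derivative D1 (x, l)) (at x)"
proof -
  have "((\<lambda>y. (y, l)) has_derivative (\<lambda>v. (v, 0))) (at x)"
    by (intro derivative_eq_intros) auto
  moreover have "blinfun_apply (D1 (x, l)) = (\<lambda>v. Df (x, l) (v, 0))"
    by (simp add: D1_def fun_eq_iff)
  ultimately show ?thesis
    using has_derivative_compose[of "\<lambda>y. (y, l)", OF _ has_derivative_Df] by (simp add: o_def)
qed

lemma frechet_derivative_partial: "frechet_derivative (\<lambda>y. f y l) (at x) = D1 (x, l)"
  using frechet_derivative_at[OF has_derivative_D1] by simp

lemma orbit_has_derivative:
  "(orbit f \<mu> n has_derivative comp_upto (\<lambda>k. D1 (orbit f \<mu> k x, \<mu> k)) n) (at x)"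
proof (induction n)
  case 0
  have "orbit f \<mu> 0 = (\<lambda>y. y)" by (simp add: fun_eq_iff)
  then show ?case by (simp add: has_derivative_ident)
next
  case (Suc n)
  have "orbit f \<mu> (Suc n) = (\<lambda>y. f (orbit f \<mu> n y) (\<mu> n))" by (simp add: fun_eq_iff)
  with has_derivative_compose[OF Suc.IH has_derivative_D1] show ?case
    by (simp add: o_def)
qed

lemma frechet_derivative_orbit:
  "frechet_derivative (orbit f \<mu> n) (at x) = comp_upto (\<lambda>k. D1 (orbit f \<mu> k x, \<mu> k)) n"
  using frechet_derivative_at[OF orbit_has_derivative] by simp

lemma continuous_on_funpow_param: "continuous_on UNIV (\<lambda>l. ((\<lambda>x. f x l) ^^ n) w)"
proof (induction n)
  case (Suc n)
  have "continuous_on UNIV (\<lambda>l. (((\<lambda>x. f x l) ^^ n) w, l))"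
    by (intro continuous_on_Pair Suc.IH continuous_on_id)
  from continuous_on_compose2[OF continuous_on_f this] show ?case by simp
qed simp

context
  fixes B :: "('a \<times> 'b) set"
  assumes bounded_B: "bounded B" and fixed_B: "\<And>x0 l0. (x0, l0) \<in> B \<Longrightarrow> f x0 l0 = x0"
begin

lemma orbit_stays_near:
  assumes "\<rho> > 0"
  obtains c where "c > 0"
    "\<And>x0 l0 \<mu> x k. (x0, l0) \<in> B \<Longrightarrow> (\<And>j. j < n \<Longrightarrow> dist (\<mu> j) l0 < c) \<Longrightarrow> dist x x0 < c \<Longrightarrow> k \<le> n
       \<Longrightarrow> dist (orbit f \<mu> k x) x0 < \<rho>"
  using assms
proof (induction n arbitrary: \<rho> thesis)
  case 0
  show ?case by (rule "0.prems"(1)[of \<rho>]) (use "0.prems"(2) in auto)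
next
  case (Suc n)
  obtain \<sigma> where "\<sigma> > 0" and \<sigma>: "\<And>p p0. p0 \<in> B \<Longrightarrow> dist p p0 < \<sigma>
      \<Longrightarrow> dist (f (fst p) (snd p)) (f (fst p0) (snd p0)) < \<rho>"
    using uniformly_continuous_near_bounded[OF continuous_on_f bounded_B Suc.prems(2)] by blast
  obtain c where "c > 0" and c: "\<And>x0 l0 \<mu> x k. (x0, l0) \<in> B
      \<Longrightarrow> (\<And>j. j < n \<Longrightarrow> dist (\<mu> j) l0 < c) \<Longrightarrow> dist x x0 < c \<Longrightarrow> k \<le> n
       \<Longrightarrow> dist (orbit f \<mu> k x) x0 < min \<rho> (\<sigma> / 2)"
    using Suc.IH[of "min \<rho> (\<sigma> / 2)"] \<open>\<sigma> > 0\<close> Suc.prems(2) by auto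
  show ?case
  proof (rule Suc.prems(1)[of "min c (\<sigma> / 2)"])
    fix x0 l0 \<mu> x k
    assume B: "(x0, l0) \<in> B" and \<mu>: "\<And>j. j < Suc n \<Longrightarrow> dist (\<mu> j) l0 < min c (\<sigma> / 2)"
      and x: "dist x x0 < min c (\<sigma> / 2)" and k: "k \<le> Suc n"
    have near: "dist (orbit f \<mu> k x) x0 < min \<rho> (\<sigma> / 2)" if "k \<le> n" for k
      using c[OF B _ _ that] \<mu> x by simp
    show "dist (orbit f \<mu> k x) x0 < \<rho>"
    proof (cases "k \<le> n")
      case False
      then have "k = Suc n" using k by simp
      have "dist (orbit f \<mu> n x, \<mu> n) (x0, l0) < \<sigma>"
        using dist_Pair_le_add[of "orbit f \<mu> n x" "\<mu> n" x0 l0] near[of n] \<mu>[of n] by simp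
      from \<sigma>[OF B this] show ?thesis using fixed_B[OF B] \<open>k = Suc n\<close> by simp
    qed (use near in simp)
  qed (use \<open>c > 0\<close> \<open>\<sigma> > 0\<close> in simp)
qed

lemma orbit_derivative_near_power:
  assumes "\<eta> > 0"
  obtains c where "c > 0"
    "\<And>x0 l0 \<mu> x k. (x0, l0) \<in> B \<Longrightarrow> (\<And>j. j < n \<Longrightarrow> dist (\<mu> j) l0 < c) \<Longrightarrow> dist x x0 < c \<Longrightarrow> k \<le> n
       \<Longrightarrow> norm (comp_upto (\<lambda>j. D1 (orbit f \<mu> j x, \<mu> j)) k - comp_upto (\<lambda>_. D1 (x0, l0)) k) \<le> \<eta>"
proof -
  obtain K0 where K0: "\<And>p p0. p0 \<in> B \<Longrightarrow> dist p p0 < 1 \<Longrightarrow> norm (D1 p) \<le> K0"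
    using bounded_near_bounded[OF continuous_on_D1 bounded_B] by blast
  define K where "K = max 1 K0"
  define \<eta>' where "\<eta>' = \<eta> / (n * K ^ n + 1)"
  have "1 \<le> K" by (simp add: K_def)
  then have "0 \<le> n * K ^ n" by simp
  then have "\<eta>' > 0" and \<eta>': "n * K ^ n * \<eta>' \<le> \<eta>"
    using \<open>\<eta> > 0\<close> by (auto simp: \<eta>'_def field_simps)
  obtain \<sigma> where "\<sigma> > 0" and \<sigma>: "\<And>p p0. p0 \<in> B \<Longrightarrow> dist p p0 < \<sigma> \<Longrightarrow> dist (D1 p) (D1 p0) < \<eta>'"
    using uniformly_continuous_near_bounded[OF continuous_on_D1 bounded_B \<open>\<eta>' > 0\<close>] by blast
  define \<rho> where "\<rho> = min \<sigma> 1 / 2"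
  have "\<rho> > 0" using \<open>\<sigma> > 0\<close> by (simp add: \<rho>_def)
  obtain c where "c > 0" and c: "\<And>x0 l0 \<mu> x k. (x0, l0) \<in> B
      \<Longrightarrow> (\<And>j. j < n \<Longrightarrow> dist (\<mu> j) l0 < c) \<Longrightarrow> dist x x0 < c \<Longrightarrow> k \<le> n
       \<Longrightarrow> dist (orbit f \<mu> k x) x0 < \<rho>"
    using orbit_stays_near[OF \<open>\<rho> > 0\<close>] by blast
  show thesis
  proof (rule that[of "min c \<rho>"])
    fix x0 l0 \<mu> x k
    assume B: "(x0, l0) \<in> B" and \<mu>: "\<And>j. j < n \<Longrightarrow> dist (\<mu> j) l0 < min c \<rho>"
      and x: "dist x x0 < min c \<rho>" and "k \<le> n"
    have orbit_near: "dist (orbit f \<mu> j x) x0 < \<rho>" if "j \<le> n" for j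
      using c[OF B _ _ that, of \<mu> x] \<mu> x by simp
    have near: "dist (orbit f \<mu> j x, \<mu> j) (x0, l0) < min \<sigma> 1" if "j < k" for j
      using dist_Pair_le_add[of "orbit f \<mu> j x" "\<mu> j" x0 l0] orbit_near[of j] \<mu>[of j] that \<open>k \<le> n\<close>
      by (simp add: \<rho>_def)
    have "norm (comp_upto (\<lambda>j. D1 (orbit f \<mu> j x, \<mu> j)) k - comp_upto (\<lambda>_. D1 (x0, l0)) k)
        \<le> k * K ^ k * \<eta>'"
    proof (rule norm_comp_upto_diff_le)
      fix j assume "j < k"
      then have "dist (orbit f \<mu> j x, \<mu> j) (x0, l0) < \<sigma>" "dist (orbit f \<mu> j x, \<mu> j) (x0, l0) < 1"
        using near by auto
      then show "norm (D1 (orbit f \<mu> j x, \<mu> j) - D1 (x0, l0)) \<le> \<eta>'"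
        and "norm (D1 (orbit f \<mu> j x, \<mu> j)) \<le> K"
        using \<sigma>[OF B] K0[OF B] unfolding K_def dist_norm by (auto intro: less_imp_le max.coboundedI2)
    next
      show "norm (D1 (x0, l0)) \<le> K" using K0[OF B, of "(x0, l0)"] by (simp add: K_def)
    qed (fact \<open>1 \<le> K\<close>)
    also have "\<dots> \<le> n * K ^ n * \<eta>'"
      using \<open>k \<le> n\<close> \<open>1 \<le> K\<close> \<open>\<eta>' > 0\<close>
      by (intro mult_right_mono mult_mono power_increasing) auto
    finally show "norm (comp_upto (\<lambda>j. D1 (orbit f \<mu> j x, \<mu> j)) k - comp_upto (\<lambda>_. D1 (x0, l0)) k)
        \<le> \<eta>"
      using \<eta>' by linarith
  qed (use \<open>c > 0\<close> \<open>\<rho> > 0\<close> in simp)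
qed

lemma orbit_derivative_small:
  assumes small: "\<And>x0 l0 n. (x0, l0) \<in> B \<Longrightarrow> N \<le> n \<Longrightarrow> norm (comp_upto (\<lambda>_. D1 (x0, l0)) n) < 1 / 4"
  obtains c where "c > 0"
    "\<And>x0 l0 \<mu> x n. (x0, l0) \<in> B \<Longrightarrow> (\<And>j. j < M \<Longrightarrow> dist (\<mu> j) l0 < c) \<Longrightarrow> dist x x0 < c \<Longrightarrow> N \<le> n \<Longrightarrow> n \<le> M
       \<Longrightarrow> norm (comp_upto (\<lambda>j. D1 (orbit f \<mu> j x, \<mu> j)) n) < 1 / 2"
proof -
  obtain c where "c > 0" and c: "\<And>x0 l0 \<mu> x k. (x0, l0) \<in> B
      \<Longrightarrow> (\<And>j. j < M \<Longrightarrow> dist (\<mu> j) l0 < c) \<Longrightarrow> dist x x0 < c \<Longrightarrow> k \<le> M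
       \<Longrightarrow> norm (comp_upto (\<lambda>j. D1 (orbit f \<mu> j x, \<mu> j)) k - comp_upto (\<lambda>_. D1 (x0, l0)) k) \<le> 1 / 4"
    using orbit_derivative_near_power[of "1 / 4" M] by auto
  show thesis
  proof (rule that[OF \<open>c > 0\<close>])
    fix x0 l0 \<mu> x n
    assume B: "(x0, l0) \<in> B" and "\<And>j. j < M \<Longrightarrow> dist (\<mu> j) l0 < c" "dist x x0 < c" "N \<le> n" "n \<le> M"
    then have "norm (comp_upto (\<lambda>j. D1 (orbit f \<mu> j x, \<mu> j)) n - comp_upto (\<lambda>_. D1 (x0, l0)) n)
        \<le> 1 / 4"
      and "norm (comp_upto (\<lambda>_. D1 (x0, l0)) n) < 1 / 4"
      using c small by auto
    then show "norm (comp_upto (\<lambda>j. D1 (orbit f \<mu> j x, \<mu> j)) n) < 1 / 2"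
      using norm_triangle_ineq2[of "comp_upto (\<lambda>j. D1 (orbit f \<mu> j x, \<mu> j)) n"
          "comp_upto (\<lambda>_. D1 (x0, l0)) n"]
      by linarith
  qed
qed

end

lemma orbit_stays_near_fixpoint:
  assumes "f x0 l0 = x0" "\<rho> > 0"
  obtains c where "c > 0"
    "\<And>\<mu> x k. (\<And>j. j < n \<Longrightarrow> dist (\<mu> j) l0 < c) \<Longrightarrow> dist x x0 < c \<Longrightarrow> k \<le> n
       \<Longrightarrow> dist (orbit f \<mu> k x) x0 < \<rho>"
proof -
  have "bounded {(x0, l0)}" and fixed: "\<And>x l. (x, l) \<in> {(x0, l0)} \<Longrightarrow> f x l = x"
    using assms(1) by auto
  obtain c where "c > 0" and c: "\<And>x0' l0' \<mu> x k. (x0', l0') \<in> {(x0, l0)}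
      \<Longrightarrow> (\<And>j. j < n \<Longrightarrow> dist (\<mu> j) l0' < c) \<Longrightarrow> dist x x0' < c \<Longrightarrow> k \<le> n
      \<Longrightarrow> dist (orbit f \<mu> k x) x0' < \<rho>"
    using orbit_stays_near[where n = n, OF \<open>bounded {(x0, l0)}\<close> fixed \<open>\<rho> > 0\<close>] by blast
  show thesis
    by (rule that[OF \<open>c > 0\<close>]) (rule c[OF singletonI])
qed

lemma orbit_derivative_near_power_fixpoint:
  assumes "f x0 l0 = x0" "\<eta> > 0"
  obtains c where "c > 0"
    "\<And>\<mu> x. (\<And>j. j < n \<Longrightarrow> dist (\<mu> j) l0 < c) \<Longrightarrow> dist x x0 < c
       \<Longrightarrow> norm (comp_upto (\<lambda>j. D1 (orbit f \<mu> j x, \<mu> j)) n - comp_upto (\<lambda>_. D1 (x0, l0)) n) \<le> \<eta>"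
proof -
  have "bounded {(x0, l0)}" and fixed: "\<And>x l. (x, l) \<in> {(x0, l0)} \<Longrightarrow> f x l = x"
    using assms(1) by auto
  obtain c where "c > 0" and c: "\<And>x0' l0' \<mu> x k. (x0', l0') \<in> {(x0, l0)}
      \<Longrightarrow> (\<And>j. j < n \<Longrightarrow> dist (\<mu> j) l0' < c) \<Longrightarrow> dist x x0' < c \<Longrightarrow> k \<le> n
      \<Longrightarrow> norm (comp_upto (\<lambda>j. D1 (orbit f \<mu> j x, \<mu> j)) k - comp_upto (\<lambda>_. D1 (x0', l0')) k) \<le> \<eta>"
    using orbit_derivative_near_power[where n = n, OF \<open>bounded {(x0, l0)}\<close> fixed \<open>\<eta> > 0\<close>] by blast
  show thesis
    by (rule that[OF \<open>c > 0\<close>]) (rule c[OF singletonI _ _ order_refl])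
qed

lemma funpow_lipschitz_on_convex:
  assumes "convex S"
    and bound: "\<And>x. x \<in> S \<Longrightarrow> norm (comp_upto (\<lambda>k. D1 (((\<lambda>y. f y l) ^^ k) x, l)) n) \<le> q"
    and "x \<in> S" "y \<in> S"
  shows "dist (((\<lambda>y. f y l) ^^ n) x) (((\<lambda>y. f y l) ^^ n) y) \<le> q * dist x y"
  unfolding dist_norm
proof (rule differentiable_bound[OF \<open>convex S\<close> _ _ \<open>x \<in> S\<close> \<open>y \<in> S\<close>])
  fix z assume "z \<in> S"
  show "(((\<lambda>y. f y l) ^^ n) has_derivative comp_upto (\<lambda>k. D1 (((\<lambda>y. f y l) ^^ k) z, l)) n)
      (at z within S)"
    using has_derivative_at_withinI[OF orbit_has_derivative[of "\<lambda>_. l"]] by (simp add: orbit_const)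
  show "onorm (comp_upto (\<lambda>k. D1 (((\<lambda>y. f y l) ^^ k) z, l)) n) \<le> q"
    using bound[OF \<open>z \<in> S\<close>] by (simp add: norm_blinfun.rep_eq)
qed

lemma funpow_contraction_near_stable_fixpoint:
  assumes fixed: "f x0 l0 = x0" and stable: "norm (comp_upto (\<lambda>_. D1 (x0, l0)) N) < 1"
  obtains q r where "0 \<le> q" "q < 1" "r > 0"
    "\<And>l x. dist l l0 < r \<Longrightarrow> x \<in> cball x0 r
       \<Longrightarrow> norm (comp_upto (\<lambda>k. D1 (((\<lambda>y. f y l) ^^ k) x, l)) N) \<le> q"
    "\<And>l x y. dist l l0 < r \<Longrightarrow> x \<in> cball x0 r \<Longrightarrow> y \<in> cball x0 r
       \<Longrightarrow> dist (((\<lambda>y. f y l) ^^ N) x) (((\<lambda>y. f y l) ^^ N) y) \<le> q * dist x y"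
proof -
  define a where "a = norm (comp_upto (\<lambda>_. D1 (x0, l0)) N)"
  have "0 \<le> a" "a < 1" using stable by (auto simp: a_def)
  then obtain c where "c > 0" and c: "\<And>\<mu> x. (\<And>j. j < N \<Longrightarrow> dist (\<mu> j) l0 < c) \<Longrightarrow> dist x x0 < c
      \<Longrightarrow> norm (comp_upto (\<lambda>j. D1 (orbit f \<mu> j x, \<mu> j)) N - comp_upto (\<lambda>_. D1 (x0, l0)) N)
          \<le> (1 - a) / 2"
    using orbit_derivative_near_power_fixpoint[OF fixed, of "(1 - a) / 2" N] by auto
  have bound: "norm (comp_upto (\<lambda>k. D1 (((\<lambda>y. f y l) ^^ k) x, l)) N) \<le> (1 + a) / 2"
    if "dist l l0 < c / 2" "x \<in> cball x0 (c / 2)" for l x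
  proof -
    have "norm (comp_upto (\<lambda>k. D1 (((\<lambda>y. f y l) ^^ k) x, l)) N - comp_upto (\<lambda>_. D1 (x0, l0)) N)
        \<le> (1 - a) / 2"
      using c[of "\<lambda>_. l" x] that \<open>c > 0\<close> by (simp add: orbit_const dist_commute)
    then show ?thesis
      using norm_triangle_ineq2[of "comp_upto (\<lambda>k. D1 (((\<lambda>y. f y l) ^^ k) x, l)) N"
          "comp_upto (\<lambda>_. D1 (x0, l0)) N"]
      unfolding a_def by simp
  qed
  show thesis
  proof (rule that[of "(1 + a) / 2" "c / 2"])
    fix l x y assume "dist l l0 < c / 2" "x \<in> cball x0 (c / 2)" "y \<in> cball x0 (c / 2)"
    then show "dist (((\<lambda>y. f y l) ^^ N) x) (((\<lambda>y. f y l) ^^ N) y) \<le> (1 + a) / 2 * dist x y"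
      using bound by (intro funpow_lipschitz_on_convex[of "cball x0 (c / 2)"]) auto
  qed (use \<open>0 \<le> a\<close> \<open>a < 1\<close> \<open>c > 0\<close> bound in auto)
qed

(* Banach's theorem gives a fixed point z of f(., l)^N near x0; as f(., l) commutes with its
   iterate, f z l is another one nearby, hence equal to z. *)
lemma fixpoint_exists_near_stable_fixpoint:
  assumes fixed: "f x0 l0 = x0" and q: "0 \<le> q" "q < 1" and "r > 0"
    and lip: "\<And>l x y. dist l l0 < r \<Longrightarrow> x \<in> cball x0 r \<Longrightarrow> y \<in> cball x0 r
       \<Longrightarrow> dist (((\<lambda>y. f y l) ^^ N) x) (((\<lambda>y. f y l) ^^ N) y) \<le> q * dist x y"
  obtains c where "0 < c" "c \<le> r" "\<And>l. dist l l0 < c \<Longrightarrow> \<exists>x \<in> ball x0 r. f x l = x"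
proof -
  let ?h = "\<lambda>l. (\<lambda>y. f y l) ^^ N"
  obtain c1 where "c1 > 0" and c1': "\<And>\<mu> x k. (\<And>j. j < 1 \<Longrightarrow> dist (\<mu> j) l0 < c1) \<Longrightarrow> dist x x0 < c1
      \<Longrightarrow> k \<le> 1 \<Longrightarrow> dist (orbit f \<mu> k x) x0 < r"
    using orbit_stays_near_fixpoint[OF fixed \<open>r > 0\<close>] by blast
  have c1: "dist (f x l) x0 < r" if "dist l l0 < c1" "dist x x0 < c1" for l x
    using c1'[of "\<lambda>_. l" x 1] that by simp
  define \<delta> where "\<delta> = min c1 r / 2"
  have "\<delta> > 0" "\<delta> < r" "\<delta> < c1" using \<open>c1 > 0\<close> \<open>r > 0\<close> by (auto simp: \<delta>_def)
  then have "(1 - q) * \<delta> > 0" using q by simp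
  then obtain c2 where "c2 > 0" and c2': "\<And>\<mu> x k. (\<And>j. j < N \<Longrightarrow> dist (\<mu> j) l0 < c2) \<Longrightarrow> dist x x0 < c2
      \<Longrightarrow> k \<le> N \<Longrightarrow> dist (orbit f \<mu> k x) x0 < (1 - q) * \<delta>"
    using orbit_stays_near_fixpoint[OF fixed] by blast
  have c2: "dist (?h l x0) x0 < (1 - q) * \<delta>" if "dist l l0 < c2" for l
    using c2'[of "\<lambda>_. l" x0 N] that \<open>c2 > 0\<close> by (simp add: orbit_const)
  show thesis
  proof (rule that[of "min r (min c1 c2)"])
    fix l assume l: "dist l l0 < min r (min c1 c2)"
    have "\<exists>z \<in> cball x0 \<delta>. ?h l z = z"
    proof (rule contraction_cball_fixpoint[OF q])
      show "dist (?h l x0) x0 \<le> (1 - q) * \<delta>" using c2 l by (simp add: less_imp_le)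
      fix x y assume "x \<in> cball x0 \<delta>" "y \<in> cball x0 \<delta>"
      then show "dist (?h l x) (?h l y) \<le> q * dist x y" using lip l \<open>\<delta> < r\<close> by simp
    qed (use \<open>\<delta> > 0\<close> in simp)
    then obtain z where z: "dist x0 z \<le> \<delta>" "?h l z = z" by auto
    have "dist (f z l) x0 < r" using c1 l z(1) \<open>\<delta> < c1\<close> by (simp add: dist_commute)
    moreover have "?h l (f z l) = f z l" using z(2) by (metis funpow_swap1)
    ultimately have "f z l = z"
      using contraction_fixpoint_unique[OF q(2) lip[of l "f z l" z]] z l \<open>\<delta> < r\<close>
      by (simp add: dist_commute)
    then show "\<exists>x \<in> ball x0 r. f x l = x" using z(1) \<open>\<delta> < r\<close> by auto
  qed (use \<open>r > 0\<close> \<open>c1 > 0\<close> \<open>c2 > 0\<close> in auto)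
qed

lemma local_fixpoint_branch:
  assumes fixed: "f x0 l0 = x0" and stable: "norm (comp_upto (\<lambda>_. D1 (x0, l0)) N) < 1"
  obtains c \<delta> z where "c > 0" "\<delta> > 0" "continuous_on (ball l0 c) z"
    "\<And>l. dist l l0 < c
       \<Longrightarrow> f (z l) l = z l \<and> dist (z l) x0 < \<delta> \<and> norm (comp_upto (\<lambda>_. D1 (z l, l)) N) < 1"
    "\<And>l x. dist l l0 < c \<Longrightarrow> dist x x0 < \<delta> \<Longrightarrow> f x l = x \<Longrightarrow> x = z l"
proof -
  let ?h = "\<lambda>l. (\<lambda>y. f y l) ^^ N"
  obtain q r where q: "0 \<le> q" "q < 1" and "r > 0"
    and bound: "\<And>l x. dist l l0 < r \<Longrightarrow> x \<in> cball x0 r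
      \<Longrightarrow> norm (comp_upto (\<lambda>k. D1 (((\<lambda>y. f y l) ^^ k) x, l)) N) \<le> q"
    and lip: "\<And>l x y. dist l l0 < r \<Longrightarrow> x \<in> cball x0 r \<Longrightarrow> y \<in> cball x0 r
      \<Longrightarrow> dist (?h l x) (?h l y) \<le> q * dist x y"
    using funpow_contraction_near_stable_fixpoint[OF fixed stable] by blast
  obtain c where "0 < c" "c \<le> r" and exists: "\<And>l. dist l l0 < c \<Longrightarrow> \<exists>x \<in> ball x0 r. f x l = x"
    using fixpoint_exists_near_stable_fixpoint[OF fixed q \<open>r > 0\<close> lip] by blast
  then obtain z where z: "\<And>l. dist l l0 < c \<Longrightarrow> z l \<in> ball x0 r \<and> f (z l) l = z l"
    by metis
  have unique: "x = z l" if "dist l l0 < c" "x \<in> cball x0 r" "f x l = x" for l x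
    using contraction_fixpoint_unique[OF q(2) lip[of l x "z l"]] z[of l] that \<open>c \<le> r\<close>
    by (simp add: funpow_fixpoint)
  show thesis
  proof (rule that[OF \<open>c > 0\<close> \<open>r > 0\<close>])
    show "continuous_on (ball l0 c) z"
    proof (rule continuous_on_contraction_fixpoint[OF q(2), of _ "cball x0 r" ?h])
      fix l x y assume "l \<in> ball l0 c" "x \<in> cball x0 r" "y \<in> cball x0 r"
      then show "dist (?h l x) (?h l y) \<le> q * dist x y" using lip \<open>c \<le> r\<close> by (simp add: dist_commute)
    next
      fix l assume "l \<in> ball l0 c"
      then show "z l \<in> cball x0 r" "?h l (z l) = z l"
        using z[of l] by (auto simp: dist_commute funpow_fixpoint)
    next
      fix x show "continuous_on (ball l0 c) (\<lambda>l. ?h l x)"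
        using continuous_on_funpow_param continuous_on_subset by blast
    qed
  next
    fix l assume l: "dist l l0 < c"
    have "comp_upto (\<lambda>_. D1 (z l, l)) N = comp_upto (\<lambda>k. D1 (((\<lambda>y. f y l) ^^ k) (z l), l)) N"
      using z[OF l] by (simp add: funpow_fixpoint)
    also have "norm \<dots> \<le> q"
      using bound z[OF l] l \<open>c \<le> r\<close> by simp
    finally show "f (z l) l = z l \<and> dist (z l) x0 < r \<and> norm (comp_upto (\<lambda>_. D1 (z l, l)) N) < 1"
      using z[OF l] q by (auto simp: dist_commute)
  next
    fix l x assume "dist l l0 < c" "dist x x0 < r" "f x l = x"
    then show "x = z l" using unique by (simp add: dist_commute)
  qed
qed

end

locale stable_fixpoint_curve = C1_family f Df
  for f :: "'a::euclidean_space \<Rightarrow> 'b::euclidean_space \<Rightarrow> 'a" and Df +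
  fixes Lam :: "real \<Rightarrow> 'b" and X :: "real \<Rightarrow> 'a" and N :: nat
  assumes continuous_on_Lam: "continuous_on UNIV Lam"
    and X_fixed: "\<And>s. f (X s) (Lam s) = X s"
    and X_stable: "\<And>s. norm (comp_upto (\<lambda>_. D1 (X s, Lam s)) N) < 1"
    and connected_graph: "connected (range (\<lambda>s. (s, X s)))"
begin

definition stable_fixpoints :: "(real \<times> 'a) set" where
  "stable_fixpoints = {(t, x). f x (Lam t) = x \<and> norm (comp_upto (\<lambda>_. D1 (x, Lam t)) N) < 1}"

lemma local_branch:
  assumes "(t0, x0) \<in> stable_fixpoints"
  obtains \<eta> \<delta> \<psi> where "\<eta> > 0" "\<delta> > 0" "continuous_on (ball t0 \<eta>) \<psi>" "\<psi> t0 = x0"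
    "\<And>u. u \<in> ball t0 \<eta> \<Longrightarrow> (u, \<psi> u) \<in> stable_fixpoints"
    "\<And>u x. u \<in> ball t0 \<eta> \<Longrightarrow> dist x x0 < \<delta> \<Longrightarrow> f x (Lam u) = x \<Longrightarrow> x = \<psi> u"
proof -
  have "f x0 (Lam t0) = x0" "norm (comp_upto (\<lambda>_. D1 (x0, Lam t0)) N) < 1"
    using assms by (auto simp: stable_fixpoints_def)
  then obtain c \<delta> z where "c > 0" "\<delta> > 0" and z_cont: "continuous_on (ball (Lam t0) c) z"
    and z: "\<And>l. dist l (Lam t0) < c
      \<Longrightarrow> f (z l) l = z l \<and> dist (z l) x0 < \<delta> \<and> norm (comp_upto (\<lambda>_. D1 (z l, l)) N) < 1"
    and z_unique: "\<And>l x. dist l (Lam t0) < c \<Longrightarrow> dist x x0 < \<delta> \<Longrightarrow> f x l = x \<Longrightarrow> x = z l"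
    using local_fixpoint_branch by blast
  obtain \<eta> where "\<eta> > 0" and \<eta>: "\<And>u. dist u t0 < \<eta> \<Longrightarrow> dist (Lam u) (Lam t0) < c"
    using continuous_on_Lam \<open>c > 0\<close> unfolding continuous_on_iff by (metis UNIV_I)
  then have Lam_ball: "Lam u \<in> ball (Lam t0) c" if "u \<in> ball t0 \<eta>" for u
    using \<eta>[of u] that by (metis dist_commute mem_ball)
  show thesis
  proof (rule that[OF \<open>\<eta> > 0\<close> \<open>\<delta> > 0\<close>, of "z \<circ> Lam"])
    have "Lam ` ball t0 \<eta> \<subseteq> ball (Lam t0) c" using Lam_ball by blast
    from continuous_on_compose2[OF z_cont continuous_on_subset[OF continuous_on_Lam subset_UNIV] this]
    show "continuous_on (ball t0 \<eta>) (z \<circ> Lam)" by (simp add: o_def)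
    show "(z \<circ> Lam) t0 = x0"
      using z_unique[of "Lam t0" x0] \<open>f x0 (Lam t0) = x0\<close> \<open>c > 0\<close> \<open>\<delta> > 0\<close> by simp
  next
    fix u assume "u \<in> ball t0 \<eta>"
    then have "dist (Lam u) (Lam t0) < c" using Lam_ball by (metis dist_commute mem_ball)
    then show "(u, (z \<circ> Lam) u) \<in> stable_fixpoints"
      and "\<And>x. dist x x0 < \<delta> \<Longrightarrow> f x (Lam u) = x \<Longrightarrow> x = (z \<circ> Lam) u"
      using z z_unique by (auto simp: stable_fixpoints_def)
  qed
qed

lemma branches_agree:
  assumes "connected C" "continuous_on C y1" "continuous_on C y2"
    and "\<And>u. u \<in> C \<Longrightarrow> (u, y1 u) \<in> stable_fixpoints" "\<And>u. u \<in> C \<Longrightarrow> (u, y2 u) \<in> stable_fixpoints"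
    and "a \<in> C" "y1 a = y2 a" "u \<in> C"
  shows "y1 u = y2 u"
proof -
  define Z where "Z = {w \<in> C. y1 w - y2 w = 0}"
  have "closedin (top_of_set C) Z"
    unfolding Z_def by (intro continuous_closedin_preimage_constant continuous_on_diff assms(2,3))
  moreover have "openin (top_of_set C) Z"
    unfolding openin_euclidean_subtopology_iff
  proof (intro conjI ballI)
    show "Z \<subseteq> C" by (auto simp: Z_def)
    fix v assume "v \<in> Z"
    then have "v \<in> C" "y1 v = y2 v" by (auto simp: Z_def)
    obtain \<eta> \<delta> \<psi> where "\<eta> > 0" "\<delta> > 0"
      and \<psi>: "\<And>w x. w \<in> ball v \<eta> \<Longrightarrow> dist x (y1 v) < \<delta> \<Longrightarrow> f x (Lam w) = x \<Longrightarrow> x = \<psi> w"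
      using local_branch[OF assms(4)[OF \<open>v \<in> C\<close>]] by metis
    obtain d1 where "d1 > 0" and d1: "\<And>w. w \<in> C \<Longrightarrow> dist w v < d1 \<Longrightarrow> dist (y1 w) (y1 v) < \<delta>"
      using assms(2) \<open>v \<in> C\<close> \<open>\<delta> > 0\<close> unfolding continuous_on_iff by metis
    obtain d2 where "d2 > 0" and d2: "\<And>w. w \<in> C \<Longrightarrow> dist w v < d2 \<Longrightarrow> dist (y2 w) (y2 v) < \<delta>"
      using assms(3) \<open>v \<in> C\<close> \<open>\<delta> > 0\<close> unfolding continuous_on_iff by metis
    show "\<exists>e>0. \<forall>w\<in>C. dist w v < e \<longrightarrow> w \<in> Z"
    proof (intro exI[of _ "min \<eta> (min d1 d2)"] conjI ballI impI)
      fix w assume "w \<in> C" "dist w v < min \<eta> (min d1 d2)"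
      then have "w \<in> ball v \<eta>" "dist (y1 w) (y1 v) < \<delta>" "dist (y2 w) (y1 v) < \<delta>"
        using d1[of w] d2[of w] \<open>y1 v = y2 v\<close> by (auto simp: dist_commute)
      moreover have "f (y1 w) (Lam w) = y1 w" "f (y2 w) (Lam w) = y2 w"
        using assms(4,5)[OF \<open>w \<in> C\<close>] by (auto simp: stable_fixpoints_def)
      ultimately have "y1 w = \<psi> w" "y2 w = \<psi> w"
        using \<psi> by blast+
      then show "w \<in> Z" using \<open>w \<in> C\<close> by (simp add: Z_def)
    qed (use \<open>\<eta> > 0\<close> \<open>d1 > 0\<close> \<open>d2 > 0\<close> in simp)
  qed
  moreover have "a \<in> Z" using assms(6,7) by (simp add: Z_def)
  ultimately have "Z = C" using assms(1) unfolding connected_clopen by blast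
  then show ?thesis using assms(8) by (auto simp: Z_def)
qed

(* Branches are taken over open intervals so that two of them glue by continuous_on_open_Un. *)
definition reachable :: "real \<Rightarrow> bool" where
  "reachable t \<longleftrightarrow> (\<exists>I y. open I \<and> connected I \<and> 0 \<in> I \<and> t \<in> I \<and> continuous_on I y
      \<and> (\<forall>u\<in>I. (u, y u) \<in> stable_fixpoints) \<and> y 0 = X 0 \<and> y t = X t)"

lemma reachable_extend:
  assumes \<psi>: "continuous_on (ball t0 \<eta>) \<psi>" "\<And>u. u \<in> ball t0 \<eta> \<Longrightarrow> (u, \<psi> u) \<in> stable_fixpoints"
    and ab: "a \<in> ball t0 \<eta>" "b \<in> ball t0 \<eta>" "\<psi> a = X a" "\<psi> b = X b"
    and "reachable a"
  shows "reachable b"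
proof -
  obtain I y where I: "open I" "connected I" "0 \<in> I" "a \<in> I" and y: "continuous_on I y"
    "\<And>u. u \<in> I \<Longrightarrow> (u, y u) \<in> stable_fixpoints" "y 0 = X 0" "y a = X a"
    using \<open>reachable a\<close> unfolding reachable_def by blast
  have agree: "y u = \<psi> u" if "u \<in> I \<inter> ball t0 \<eta>" for u
  proof (rule branches_agree[where C = "I \<inter> ball t0 \<eta>" and a = a])
    show "connected (I \<inter> ball t0 \<eta>)"
      using I(2) by (simp add: is_interval_connected_1[symmetric] is_interval_Int is_interval_ball_real)
  qed (use that I y \<psi> ab in \<open>auto intro: continuous_on_subset\<close>)
  define y' where "y' u = (if u \<in> I then y u else \<psi> u)" for u
  have "continuous_on (I \<union> ball t0 \<eta>) y'"
  proof (rule continuous_on_open_Un)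
    show "continuous_on I y'" using y(1) by (rule continuous_on_eq) (simp add: y'_def)
    show "continuous_on (ball t0 \<eta>) y'" using \<psi>(1) by (rule continuous_on_eq) (simp add: y'_def agree)
  qed (use I in auto)
  moreover have "connected (I \<union> ball t0 \<eta>)"
    using I ab by (intro connected_Un) auto
  moreover have "y' b = X b" using agree[of b] ab by (auto simp: y'_def)
  ultimately show ?thesis unfolding reachable_def
    using I y \<psi> ab by (intro exI[of _ "I \<union> ball t0 \<eta>"] exI[of _ y']) (auto simp: y'_def)
qed

lemma reachable_locally_constant:
  obtains e where "e > 0" "\<And>t'. dist t' t < e \<Longrightarrow> dist (X t') (X t) < e \<Longrightarrow> reachable t' \<longleftrightarrow> reachable t"
proof -
  have "(t, X t) \<in> stable_fixpoints" using X_fixed X_stable by (simp add: stable_fixpoints_def)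
  then obtain \<eta> \<delta> \<psi> where "\<eta> > 0" "\<delta> > 0" and \<psi>: "continuous_on (ball t \<eta>) \<psi>" "\<psi> t = X t"
    "\<And>u. u \<in> ball t \<eta> \<Longrightarrow> (u, \<psi> u) \<in> stable_fixpoints"
    "\<And>u x. u \<in> ball t \<eta> \<Longrightarrow> dist x (X t) < \<delta> \<Longrightarrow> f x (Lam u) = x \<Longrightarrow> x = \<psi> u"
    using local_branch by blast
  show thesis
  proof (rule that[of "min \<eta> \<delta>"])
    fix t' assume "dist t' t < min \<eta> \<delta>" "dist (X t') (X t) < min \<eta> \<delta>"
    then have "t' \<in> ball t \<eta>" "X t' = \<psi> t'" using \<psi>(4) X_fixed by (auto simp: dist_commute)
    moreover have "t \<in> ball t \<eta>" using \<open>\<eta> > 0\<close> by simp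
    ultimately show "reachable t' \<longleftrightarrow> reachable t"
      using reachable_extend[OF \<psi>(1,3)] \<psi>(2) by metis
  qed (use \<open>\<eta> > 0\<close> \<open>\<delta> > 0\<close> in simp)
qed

lemma reachable_everywhere: "reachable t"
proof -
  let ?G = "range (\<lambda>s. (s, X s))"
  have "reachable (fst (t, X t))"
  proof (rule connected_induction_simple[OF connected_graph, of "(0, X 0)"])
    show "(0, X 0) \<in> ?G" "(t, X t) \<in> ?G" by auto
    have "(0, X 0) \<in> stable_fixpoints" using X_fixed X_stable by (simp add: stable_fixpoints_def)
    then obtain \<eta> \<delta> \<psi> where "\<eta> > 0" "\<delta> > 0" "continuous_on (ball 0 \<eta>) \<psi>" "\<psi> 0 = X 0"
      "\<And>u. u \<in> ball 0 \<eta> \<Longrightarrow> (u, \<psi> u) \<in> stable_fixpoints"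
      "\<And>u x. u \<in> ball 0 \<eta> \<Longrightarrow> dist x (X 0) < \<delta> \<Longrightarrow> f x (Lam u) = x \<Longrightarrow> x = \<psi> u"
      using local_branch by blast
    then show "reachable (fst (0, X 0))"
      unfolding reachable_def by (intro exI[of _ "ball 0 \<eta>"] exI[of _ \<psi>]) auto
  next
    fix p assume "p \<in> ?G"
    then obtain s where p: "p = (s, X s)" by blast
    obtain e where "e > 0"
      and e: "\<And>t'. dist t' s < e \<Longrightarrow> dist (X t') (X s) < e \<Longrightarrow> reachable t' \<longleftrightarrow> reachable s"
      using reachable_locally_constant[of s] by blast
    have near: "reachable (fst q) \<longleftrightarrow> reachable s" if q_near: "q \<in> ?G \<inter> ball p e" for q
    proof -
      obtain t' where q: "q = (t', X t')" using q_near by blast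
      have "dist q p < e" using q_near by (simp add: dist_commute)
      then show ?thesis
        using e[of t'] dist_fst_le[of q p] dist_snd_le[of q p] unfolding p q by simp
    qed
    show "\<exists>T. openin (top_of_set ?G) T \<and> p \<in> T
        \<and> (\<forall>x\<in>T. \<forall>y\<in>T. reachable (fst x) \<longrightarrow> reachable (fst y))"
    proof (intro exI[of _ "?G \<inter> ball p e"] conjI ballI impI)
      show "openin (top_of_set ?G) (?G \<inter> ball p e)" by (simp add: openin_open_Int)
      show "p \<in> ?G \<inter> ball p e" using \<open>p \<in> ?G\<close> \<open>e > 0\<close> by simp
      fix x y assume "x \<in> ?G \<inter> ball p e" "y \<in> ?G \<inter> ball p e" "reachable (fst x)"
      then show "reachable (fst y)" using near by blast
    qed
  qed
  then show ?thesis by simp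
qed

theorem continuous_on_X: "continuous_on UNIV X"
proof -
  have "isCont X T" for T
  proof -
    obtain I y where I: "open I" "connected I" "0 \<in> I" "T \<in> I" and y: "continuous_on I y"
      "\<And>u. u \<in> I \<Longrightarrow> (u, y u) \<in> stable_fixpoints" "y 0 = X 0"
      using reachable_everywhere[of T] unfolding reachable_def by blast
    have y_eq_X: "y t = X t" if "t \<in> I" for t
    proof -
      obtain J z where J: "open J" "connected J" "0 \<in> J" "t \<in> J" and z: "continuous_on J z"
        "\<And>u. u \<in> J \<Longrightarrow> (u, z u) \<in> stable_fixpoints" "z 0 = X 0" "z t = X t"
        using reachable_everywhere[of t] unfolding reachable_def by blast
      have "y t = z t"
      proof (rule branches_agree[where C = "I \<inter> J" and a = 0])
        show "connected (I \<inter> J)"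
          using I(2) J(2) by (simp add: is_interval_connected_1[symmetric] is_interval_Int)
      qed (use that I J y z in \<open>auto intro: continuous_on_subset\<close>)
      then show ?thesis using z(4) by simp
    qed
    have "continuous_on I X" by (rule continuous_on_eq[OF y(1) y_eq_X])
    then show ?thesis using I(1,4) continuous_on_eq_continuous_at by blast
  qed
  then show ?thesis by (simp add: continuous_at_imp_continuous_on)
qed

lemma shifted_orbit_derivative_small:
  assumes "(Lam \<longlongrightarrow> lp) at_top" "(Lam \<longlongrightarrow> lm) at_bot" "(X \<longlongrightarrow> Xp) at_top" "(X \<longlongrightarrow> Xm) at_bot"
    and small: "\<And>s n. N \<le> n \<Longrightarrow> norm (comp_upto (\<lambda>_. D1 (X s, Lam s)) n) < 1 / 4"
  obtains r0 e0 where "r0 > 0" "e0 > 0"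
    "\<And>r s x n. 0 < r \<Longrightarrow> r < r0 \<Longrightarrow> dist x (X s) < e0 \<Longrightarrow> N \<le> n \<Longrightarrow> n \<le> M
       \<Longrightarrow> norm (comp_upto (\<lambda>j. D1 (orbit f (\<lambda>k. Lam (s + real k * r)) j x, Lam (s + real j * r))) n)
           < 1 / 2"
proof -
  have "bounded (range (\<lambda>s. (X s, Lam s)))"
    using bounded_Times[OF bounded_range_if_tendsto_at_top_at_bot[OF continuous_on_X assms(3,4)]
        bounded_range_if_tendsto_at_top_at_bot[OF continuous_on_Lam assms(1,2)]]
    by (rule bounded_subset) auto
  then obtain c where "c > 0" and c: "\<And>x0 l0 \<mu> x n. (x0, l0) \<in> range (\<lambda>s. (X s, Lam s))
      \<Longrightarrow> (\<And>j. j < M \<Longrightarrow> dist (\<mu> j) l0 < c) \<Longrightarrow> dist x x0 < c \<Longrightarrow> N \<le> n \<Longrightarrow> n \<le> M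
      \<Longrightarrow> norm (comp_upto (\<lambda>j. D1 (orbit f \<mu> j x, \<mu> j)) n) < 1 / 2"
    using orbit_derivative_small[where B = "range (\<lambda>s. (X s, Lam s))" and M = M and N = N]
      X_fixed small by blast
  obtain \<sigma> where "\<sigma> > 0" and \<sigma>: "\<And>s t. dist t s < \<sigma> \<Longrightarrow> dist (Lam t) (Lam s) < c"
    using uniformly_continuous_if_tendsto_at_top_at_bot[OF continuous_on_Lam assms(1,2)] \<open>c > 0\<close>
    unfolding uniformly_continuous_on_def by blast
  show thesis
  proof (rule that[of "\<sigma> / (M + 1)" c])
    fix r s x n assume r: "0 < r" "r < \<sigma> / (M + 1)" and "dist x (X s) < c" "N \<le> n" "n \<le> M"
    have "dist (Lam (s + real j * r)) (Lam s) < c" if "j < M" for j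
    proof (rule \<sigma>)
      have "real j * r \<le> M * r" using that r by (intro mult_right_mono) auto
      also have "\<dots> < \<sigma>" using r \<open>\<sigma> > 0\<close> by (simp add: field_simps)
      finally show "dist (s + real j * r) s < \<sigma>" using r by (simp add: dist_real_def)
    qed
    then show "norm (comp_upto (\<lambda>j. D1 (orbit f (\<lambda>k. Lam (s + real k * r)) j x, Lam (s + real j * r))) n)
        < 1 / 2"
      using c[of "X s" "Lam s" "\<lambda>k. Lam (s + real k * r)" x n] \<open>dist x (X s) < c\<close> \<open>N \<le> n\<close> \<open>n \<le> M\<close>
      by simp
  qed (use \<open>\<sigma> > 0\<close> \<open>c > 0\<close> in simp_all)
qed

end

theorem mainTheorem14:
  fixes f :: "real^'l \<Rightarrow> real^'m \<Rightarrow> real^'l"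
    and Lam :: "real \<Rightarrow> real^'m" and lm lp :: "real^'m"
    and X :: "real \<Rightarrow> real^'l" and N :: nat
  assumes "C1_map (\<lambda>p::((real^'l) \<times> (real^'m)). f (fst p) (snd p))"
    and "parameter_shift Lam lm lp"
    and "stable_path f Lam lm lp X"
    and "\<forall>s. \<forall>n\<ge>N. onorm (Dx f (X s) (Lam s) ^^ n) < 1/4"
  shows "\<exists>r0>0. \<exists>e0>0. \<forall>r. 0 < r \<and> r < r0 \<longrightarrow> (\<forall>\<epsilon>. 0 < \<epsilon> \<and> \<epsilon> < e0 \<longrightarrow>
           (\<forall>n\<in>{N..N*(N+1)}. \<forall>s x. norm (x - X s) \<le> \<epsilon> \<longrightarrow>
              onorm (frechet_derivative (\<lambda>y. snd ((Fr f Lam r ^^ n) (s, y))) (at x)) < 1/2))"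
proof -
  obtain Df where "\<And>p. ((\<lambda>p. f (fst p) (snd p)) has_derivative blinfun_apply (Df p)) (at p)"
    and "continuous_on UNIV Df"
    using assms(1) unfolding C1_map_def by blast
  then interpret C1_family f Df by unfold_locales
  have Lam: "continuous_on UNIV Lam" "(Lam \<longlongrightarrow> lp) at_top" "(Lam \<longlongrightarrow> lm) at_bot"
    using assms(2) unfolding parameter_shift_def C1_differentiable_on_eq
    by (auto intro: continuous_at_imp_continuous_on differentiable_imp_continuous_within)
  obtain Xm Xp where X: "\<And>s. f (X s) (Lam s) = X s" "connected (range (\<lambda>s. (s, X s)))"
    "(X \<longlongrightarrow> Xp) at_top" "(X \<longlongrightarrow> Xm) at_bot"
    using assms(3) unfolding stable_path_def by blast
  have small: "norm (comp_upto (\<lambda>_. D1 (X s, Lam s)) n) < 1 / 4" if "N \<le> n" for s n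
    using assms(4) that
    by (simp add: Dx_def frechet_derivative_partial norm_blinfun.rep_eq
        blinfun_apply_comp_upto_const)
  have "norm (comp_upto (\<lambda>_. D1 (X s, Lam s)) N) < 1" for s
    using small[of N s] by linarith
  with Lam(1) X(1,2) interpret stable_fixpoint_curve f Df Lam X N
    by unfold_locales
  obtain r0 e0 where "r0 > 0" "e0 > 0" and small_orbit: "\<And>r s x n. 0 < r \<Longrightarrow> r < r0
      \<Longrightarrow> dist x (X s) < e0 \<Longrightarrow> N \<le> n \<Longrightarrow> n \<le> N * (N + 1)
      \<Longrightarrow> norm (comp_upto (\<lambda>j. D1 (orbit f (\<lambda>k. Lam (s + real k * r)) j x, Lam (s + real j * r))) n)
          < 1 / 2"
    using shifted_orbit_derivative_small[OF Lam(2,3) X(3,4), where M = "N * (N + 1)"] small by blast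
  have "onorm (frechet_derivative (\<lambda>y. snd ((Fr f Lam r ^^ n) (s, y))) (at x))
      = norm (comp_upto (\<lambda>j. D1 (orbit f (\<lambda>k. Lam (s + real k * r)) j x, Lam (s + real j * r))) n)"
    for r n s x
    by (simp add: Fr_funpow frechet_derivative_orbit norm_blinfun.rep_eq)
  then show ?thesis
    using \<open>r0 > 0\<close> \<open>e0 > 0\<close> small_orbit
    by (intro exI[of _ r0] exI[of _ e0]) (auto simp: dist_norm)
qed

end
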